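(* Let $S$ be a finite poset whose Hasse graph $\Gamma(S)$ is the path $A_n$. Then $S$ is either a chain or a wattle if and only if every connected component of the induced subgraph of $\Gamma(S)$ on $S^\times$ has an even number of vertices.
   Context: $\Gamma(S)$: vertices $S$, edge between $s,s'$ when one covers the other. $S^\times$ is the set of junction points of $S$: elements covering at least two elements of $S$ or covered by at least two elements of $S$. A wattle is a poset that is a disjoint union of chains $Z_1,\dots,Z_t$ ($t\ge2$, $|Z_i|\ge2$) where for $i=1,\dots,t-1$ the minimal element of $Z_i$ is less than the maximal element of $Z_{i+1}$, with no other comparabilities between elements of different chains. *)

theory Defs
  imports Main
begin

text \<open>A finite poset is represented as a finite subset S of a type with a partial order,
  carrying the induced order.\<close>

definition covers_in :: "'a::order set \<Rightarrow> 'a \<Rightarrow> 'a \<Rightarrow> bool" where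
  "covers_in S x y \<longleftrightarrow> x \<in> S \<and> y \<in> S \<and> x < y \<and> \<not> (\<exists>z\<in>S. x < z \<and> z < y)"

definition hasse_adj :: "'a::order set \<Rightarrow> 'a \<Rightarrow> 'a \<Rightarrow> bool" where
  "hasse_adj S x y \<longleftrightarrow> covers_in S x y \<or> covers_in S y x"

definition hasse_is_path :: "'a::order set \<Rightarrow> bool" where
  "hasse_is_path S \<longleftrightarrow> (\<exists>v. bij_betw v {0..<card S} S \<and>
      (\<forall>i<card S. \<forall>j<card S. hasse_adj S (v i) (v j) \<longleftrightarrow> (i = Suc j \<or> j = Suc i)))"

definition junctions :: "'a::order set \<Rightarrow> 'a set" where
  "junctions S = {s \<in> S. 2 \<le> card {x \<in> S. covers_in S x s} \<or> 2 \<le> card {y \<in> S. covers_in S s y}}"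

definition induced_components :: "'a::order set \<Rightarrow> 'a set \<Rightarrow> 'a set set" where
  "induced_components S J =
     (\<lambda>x. {y \<in> J. (\<lambda>a b. a \<in> J \<and> b \<in> J \<and> hasse_adj S a b)\<^sup>*\<^sup>* x y}) ` J"

definition is_chain_set :: "'a::order set \<Rightarrow> bool" where
  "is_chain_set Z \<longleftrightarrow> (\<forall>x\<in>Z. \<forall>y\<in>Z. x \<le> y \<or> y \<le> x)"

definition is_wattle :: "'a::order set \<Rightarrow> bool" where
  "is_wattle S \<longleftrightarrow> (\<exists>t Z. 2 \<le> t \<and>
      (\<forall>i<t. Z i \<subseteq> S \<and> is_chain_set (Z i) \<and> finite (Z i) \<and> 2 \<le> card (Z i)) \<and>
      (\<forall>i<t. \<forall>j<t. i \<noteq> j \<longrightarrow> Z i \<inter> Z j = {}) \<and>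
      (\<Union>i<t. Z i) = S \<and>
      (\<forall>i<t. \<forall>j<t. i \<noteq> j \<longrightarrow> (\<forall>x\<in>Z i. \<forall>y\<in>Z j.
          x < y \<longleftrightarrow> (j = Suc i \<and> (\<forall>z\<in>Z i. x \<le> z) \<and> (\<forall>z\<in>Z j. z \<le> y)))))"

end

theory Submission
  imports Defs "HOL-Library.Z2" "HOL-Library.Disjoint_Sets"
begin

(*
  List S along the path as v 0, ..., v (n - 1) and call the edge k ascending if
  v k < v (k + 1). Two elements are comparable exactly when the path between them is
  monotone, so the junction points are the interior vertices where the path changes
  direction, and the components of the junction graph are the maximal runs of consecutive
  direction changes. Along such a run the direction alternates, so the run has even length
  iff the edges just before and just after it point the same way. Hence, if all components
  are even, every edge against the direction of the first edge is followed by an edge in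
  that direction; after reversing the path if necessary, this says that S is a chain or a
  wattle whose chains are the maximal descending runs of the path.

  Conversely, the junction points of a wattle are the two ends of the covering pairs
  min Z k < max Z (k + 1), and swapping the ends of each pair is a fixed-point-free
  involution of every component.
*)

section \<open>Covers and junction points\<close>

lemma even_card_involution:
  assumes "\<And>x. x \<in> X \<Longrightarrow> h x \<in> X" and "\<And>x. x \<in> X \<Longrightarrow> h (h x) = x"
    and "\<And>x. x \<in> X \<Longrightarrow> h x \<noteq> x"
  shows "even (card X)"
proof -
  \<comment> \<open>count modulo 2, where the pairs \<open>{x, h x}\<close> cancel\<close>
  have "(\<Sum>x\<in>X. 1 :: bit) = 0"
    by (rule sum_involution_eq_0[where h = h]) (use assms in auto)
  then have "even (of_nat (card X) :: bit)"
    by simp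
  then show ?thesis
    by (simp only: even_of_nat)
qed

lemma two_le_card_iff:
  assumes "finite A"
  shows "2 \<le> card A \<longleftrightarrow> (\<exists>a\<in>A. \<exists>b\<in>A. a \<noteq> b)"
  using card_le_Suc0_iff_eq[OF assms] by (auto simp flip: not_less_eq_eq)

lemma lower_covers_le_imp_eq: "covers_in S a s \<Longrightarrow> covers_in S b s \<Longrightarrow> a \<le> b \<Longrightarrow> a = b"
  unfolding covers_in_def using order.not_eq_order_implies_strict by blast

lemma upper_covers_le_imp_eq: "covers_in S s a \<Longrightarrow> covers_in S s b \<Longrightarrow> a \<le> b \<Longrightarrow> a = b"
  unfolding covers_in_def using order.not_eq_order_implies_strict by blast

lemma junctions_iff:
  assumes "finite S"
  shows "s \<in> junctions S \<longleftrightarrow>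
    (\<exists>a b. a \<noteq> b \<and> covers_in S a s \<and> covers_in S b s) \<or>
    (\<exists>a b. a \<noteq> b \<and> covers_in S s a \<and> covers_in S s b)"
  using assms by (auto simp: junctions_def two_le_card_iff) (auto simp: covers_in_def)

lemma junction_cover_outside_chain:
  assumes "finite S" and "s \<in> junctions S" and "is_chain_set Z"
  shows "\<exists>c \<in> S - Z. covers_in S c s \<or> covers_in S s c"
proof -
  consider (lower) a b where "a \<noteq> b" "covers_in S a s" "covers_in S b s"
    | (upper) a b where "a \<noteq> b" "covers_in S s a" "covers_in S s b"
    using assms(1,2) junctions_iff by blast
  then show ?thesis
  proof cases
    case lower
    then have "\<not> (a \<in> Z \<and> b \<in> Z)"
      using assms(3) lower_covers_le_imp_eq[of S] unfolding is_chain_set_def by metis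
    then show ?thesis
      using lower unfolding covers_in_def by blast
  next
    case upper
    then have "\<not> (a \<in> Z \<and> b \<in> Z)"
      using assms(3) upper_covers_le_imp_eq[of S] unfolding is_chain_set_def by metis
    then show ?thesis
      using upper unfolding covers_in_def by blast
  qed
qed

lemma junctions_chain: "finite S \<Longrightarrow> is_chain_set S \<Longrightarrow> junctions S = {}"
  using junction_cover_outside_chain by blast

lemma covers_in_exists_above:
  assumes "finite S" and "x \<in> S" and "y \<in> S" and "x < y"
  shows "\<exists>z. covers_in S x z \<and> z \<le> y"
proof -
  obtain z where z: "z \<in> {z \<in> S. x < z}" "z \<le> y"
    and minimal: "\<forall>w \<in> {z \<in> S. x < z}. w \<le> z \<longrightarrow> z = w"
    using finite_has_minimal2[of "{z \<in> S. x < z}" y] assms by auto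
  have "covers_in S x z"
    unfolding covers_in_def using z(1) minimal assms(2) by (auto dest: less_imp_le)
  then show ?thesis
    using z(2) by blast
qed

lemma covers_in_exists_below:
  assumes "finite S" and "x \<in> S" and "y \<in> S" and "x < y"
  shows "\<exists>z. covers_in S z y \<and> x \<le> z"
proof -
  obtain z where z: "z \<in> {z \<in> S. z < y}" "x \<le> z"
    and maximal: "\<forall>w \<in> {z \<in> S. z < y}. z \<le> w \<longrightarrow> z = w"
    using finite_has_maximal2[of "{z \<in> S. z < y}" x] assms by auto
  have "covers_in S z y"
    unfolding covers_in_def using z(1) maximal assms(3) by (auto dest: less_imp_le)
  then show ?thesis
    using z(2) by blast
qed

lemma finite_chain_Least:
  assumes "finite Z" and "Z \<noteq> {}" and "is_chain_set Z"
  shows "(LEAST z. z \<in> Z) \<in> Z \<and> (\<forall>z\<in>Z. (LEAST z. z \<in> Z) \<le> z)"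
proof -
  obtain m where m: "m \<in> Z" "\<forall>z\<in>Z. z \<le> m \<longrightarrow> m = z"
    using finite_has_minimal[OF assms(1,2)] by blast
  then have "\<forall>z\<in>Z. m \<le> z"
    using assms(3) unfolding is_chain_set_def by metis
  then show ?thesis
    using m(1) by (simp add: Least_equality)
qed

lemma finite_chain_Greatest:
  assumes "finite Z" and "Z \<noteq> {}" and "is_chain_set Z"
  shows "(GREATEST z. z \<in> Z) \<in> Z \<and> (\<forall>z\<in>Z. z \<le> (GREATEST z. z \<in> Z))"
proof -
  obtain m where m: "m \<in> Z" "\<forall>z\<in>Z. m \<le> z \<longrightarrow> m = z"
    using finite_has_maximal[OF assms(1,2)] by blast
  then have "\<forall>z\<in>Z. z \<le> m"
    using assms(3) unfolding is_chain_set_def by metis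
  then show ?thesis
    using m(1) by (simp add: Greatest_equality)
qed

lemma induced_components_subset: "C \<in> induced_components S J \<Longrightarrow> C \<subseteq> J"
  by (auto simp: induced_components_def)

lemma induced_component_closed:
  assumes "C \<in> induced_components S J" and "y \<in> C" and "z \<in> J" and "hasse_adj S y z"
  shows "z \<in> C"
  using assms by (auto simp: induced_components_def intro: rtranclp.rtrancl_into_rtrancl)

section \<open>Junction points of a wattle\<close>

locale wattle =
  fixes S :: "'a::order set" and t :: nat and Z :: "nat \<Rightarrow> 'a set"
  assumes two_le_t: "2 \<le> t"
    and Z_subset: "i < t \<Longrightarrow> Z i \<subseteq> S"
    and Z_chain: "i < t \<Longrightarrow> is_chain_set (Z i)"
    and Z_finite: "i < t \<Longrightarrow> finite (Z i)"
    and Z_card: "i < t \<Longrightarrow> 2 \<le> card (Z i)"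
    and Z_disjoint: "i < t \<Longrightarrow> j < t \<Longrightarrow> i \<noteq> j \<Longrightarrow> Z i \<inter> Z j = {}"
    and Z_cover: "(\<Union>i<t. Z i) = S"
    and less_across: "i < t \<Longrightarrow> j < t \<Longrightarrow> i \<noteq> j \<Longrightarrow> x \<in> Z i \<Longrightarrow> y \<in> Z j \<Longrightarrow>
      x < y \<longleftrightarrow> j = Suc i \<and> (\<forall>z\<in>Z i. x \<le> z) \<and> (\<forall>z\<in>Z j. z \<le> y)"

lemma is_wattle_iff: "is_wattle S \<longleftrightarrow> (\<exists>t Z. wattle S t Z)"
  unfolding is_wattle_def wattle_def by (simp add: imp_conjR all_conj_distrib Ball_def)

context wattle
begin

definition zmin :: "nat \<Rightarrow> 'a" where "zmin i = (LEAST z. z \<in> Z i)"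
definition zmax :: "nat \<Rightarrow> 'a" where "zmax i = (GREATEST z. z \<in> Z i)"

lemma finite_S: "finite S"
  using Z_cover Z_finite by auto

lemma Z_nonempty: "i < t \<Longrightarrow> Z i \<noteq> {}"
  using Z_card by fastforce

lemma zmin_least:
  assumes "i < t"
  shows "zmin i \<in> Z i \<and> (\<forall>z\<in>Z i. zmin i \<le> z)"
  unfolding zmin_def using assms by (intro finite_chain_Least Z_finite Z_nonempty Z_chain)

lemma zmax_greatest:
  assumes "i < t"
  shows "zmax i \<in> Z i \<and> (\<forall>z\<in>Z i. z \<le> zmax i)"
  unfolding zmax_def using assms by (intro finite_chain_Greatest Z_finite Z_nonempty Z_chain)

lemma obtain_index:
  assumes "x \<in> S"
  obtains i where "i < t" and "x \<in> Z i"
  using assms Z_cover by blast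

lemma index_unique: "i < t \<Longrightarrow> j < t \<Longrightarrow> x \<in> Z i \<Longrightarrow> x \<in> Z j \<Longrightarrow> i = j"
  using Z_disjoint by blast

lemma zmin_ne_zmax:
  assumes "i < t" and "j < t"
  shows "zmin i \<noteq> zmax j"
proof
  assume eq: "zmin i = zmax j"
  then have "i = j"
    using zmin_least[OF assms(1)] zmax_greatest[OF assms(2)] index_unique[OF assms] by auto
  then have "z = zmin i" if "z \<in> Z i" for z
    using zmin_least[OF assms(1)] zmax_greatest[OF assms(2)] eq that by (simp add: order.antisym)
  moreover obtain a b where "a \<in> Z i" "b \<in> Z i" "a \<noteq> b"
    using Z_card[OF assms(1)] two_le_card_iff[OF Z_finite[OF assms(1)]] by blast
  ultimately show False
    by metis
qed

lemma less_across_iff: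
  assumes "i < t" "j < t" "i \<noteq> j" "x \<in> Z i" "y \<in> Z j"
  shows "x < y \<longleftrightarrow> j = Suc i \<and> x = zmin i \<and> y = zmax j"
proof -
  have "(\<forall>z\<in>Z i. x \<le> z) \<longleftrightarrow> x = zmin i"
    using zmin_least[OF assms(1)] assms(4) by (auto intro: order.antisym)
  moreover have "(\<forall>z\<in>Z j. z \<le> y) \<longleftrightarrow> y = zmax j"
    using zmax_greatest[OF assms(2)] assms(5) by (auto intro: order.antisym)
  ultimately show ?thesis
    using less_across[OF assms] by simp
qed

lemma covers_zmin_zmax:
  assumes "Suc k < t"
  shows "covers_in S (zmin k) (zmax (Suc k))"
proof -
  have k: "k < t"
    using assms by simp
  have "\<not> (zmin k < z \<and> z < zmax (Suc k))" if "z \<in> S" for z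
  proof
    assume between: "zmin k < z \<and> z < zmax (Suc k)"
    obtain l where l: "l < t" "z \<in> Z l"
      using obtain_index[OF \<open>z \<in> S\<close>] .
    show False
    proof (cases "l = k")
      case True
      then have "z = zmin k"
        using less_across_iff[OF l(1) assms _ l(2)] zmax_greatest[OF assms] between by simp
      then show False
        using between by simp
    next
      case False
      then have "z = zmax l" and "l = Suc k"
        using less_across_iff[OF k l(1) _ _ l(2)] zmin_least[OF k] between by auto
      then show False
        using between by simp
    qed
  qed
  moreover have "zmin k < zmax (Suc k)"
    using less_across_iff[OF k assms] zmin_least[OF k] zmax_greatest[OF assms] by simp
  moreover have "zmin k \<in> S" "zmax (Suc k) \<in> S"
    using zmin_least[OF k] zmax_greatest[OF assms] Z_subset[OF k] Z_subset[OF assms] by auto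
  ultimately show ?thesis
    unfolding covers_in_def by blast
qed

lemma zmin_in_junctions:
  assumes "Suc k < t"
  shows "zmin k \<in> junctions S"
proof -
  have k: "k < t"
    using assms by simp
  have "zmin k < zmax k"
    using zmin_least[OF k] zmax_greatest[OF k] zmin_ne_zmax[OF k k]
    by (simp add: order.strict_iff_order)
  then obtain z where z: "covers_in S (zmin k) z" "z \<le> zmax k"
    using covers_in_exists_above[OF finite_S] zmin_least[OF k] zmax_greatest[OF k] Z_subset[OF k]
    by blast
  have "z \<noteq> zmax (Suc k)"
  proof
    assume "z = zmax (Suc k)"
    moreover have "zmax (Suc k) \<noteq> zmax k"
      using index_unique[OF assms k] zmax_greatest[OF k] zmax_greatest[OF assms] by force
    ultimately have "zmax (Suc k) < zmax k"
      using z(2) by simp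
    then show False
      using less_across_iff[OF assms k] zmax_greatest[OF k] zmax_greatest[OF assms] by simp
  qed
  then show ?thesis
    using junctions_iff[OF finite_S] z(1) covers_zmin_zmax[OF assms] by blast
qed

lemma zmax_in_junctions:
  assumes "Suc k < t"
  shows "zmax (Suc k) \<in> junctions S"
proof -
  have k: "k < t"
    using assms by simp
  have "zmin (Suc k) < zmax (Suc k)"
    using zmin_least[OF assms] zmax_greatest[OF assms] zmin_ne_zmax[OF assms assms]
    by (simp add: order.strict_iff_order)
  then obtain z where z: "covers_in S z (zmax (Suc k))" "zmin (Suc k) \<le> z"
    using covers_in_exists_below[OF finite_S] zmin_least[OF assms] zmax_greatest[OF assms]
      Z_subset[OF assms]
    by blast
  have "z \<noteq> zmin k"
  proof
    assume "z = zmin k"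
    moreover have "zmin (Suc k) \<noteq> zmin k"
      using index_unique[OF assms k] zmin_least[OF k] zmin_least[OF assms] by force
    ultimately have "zmin (Suc k) < zmin k"
      using z(2) by simp
    then show False
      using less_across_iff[OF assms k] zmin_least[OF k] zmin_least[OF assms] by simp
  qed
  then show ?thesis
    using junctions_iff[OF finite_S] z(1) covers_zmin_zmax[OF assms] by blast
qed

lemma junction_is_zmin_or_zmax:
  assumes "s \<in> junctions S"
  shows "\<exists>k. Suc k < t \<and> (s = zmin k \<or> s = zmax (Suc k))"
proof -
  have "s \<in> S"
    using assms by (simp add: junctions_def)
  then obtain l where l: "l < t" "s \<in> Z l"
    by (rule obtain_index)
  obtain c where c: "c \<in> S" "c \<notin> Z l" "c < s \<or> s < c"
    using junction_cover_outside_chain[OF finite_S assms Z_chain[OF l(1)]]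
    unfolding covers_in_def by blast
  obtain lc where lc: "lc < t" "c \<in> Z lc"
    using obtain_index[OF c(1)] .
  have "lc \<noteq> l"
    using c(2) lc(2) by blast
  then show ?thesis
    using c(3) less_across_iff[OF lc(1) l(1) _ lc(2) l(2)]
      less_across_iff[OF l(1) lc(1) _ l(2) lc(2)] l(1) lc(1)
    by auto
qed

lemma junctions_iff_link_end:
  "s \<in> junctions S \<longleftrightarrow> (\<exists>k. Suc k < t \<and> (s = zmin k \<or> s = zmax (Suc k)))"
  using junction_is_zmin_or_zmax zmin_in_junctions zmax_in_junctions by blast

definition partner :: "'a \<Rightarrow> 'a" where
  "partner x =
    (let i = (THE i. i < t \<and> x \<in> Z i) in if x = zmin i then zmax (Suc i) else zmin (i - 1))"

lemma partner_eq:
  assumes "i < t" "x \<in> Z i"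
  shows "partner x = (if x = zmin i then zmax (Suc i) else zmin (i - 1))"
proof -
  have "(THE i. i < t \<and> x \<in> Z i) = i"
    using assms index_unique by blast
  then show ?thesis
    by (simp add: partner_def)
qed

lemma partner_zmin:
  assumes "Suc k < t"
  shows "partner (zmin k) = zmax (Suc k)"
  using assms partner_eq[of k "zmin k"] zmin_least[of k] by simp

lemma partner_zmax:
  assumes "Suc k < t"
  shows "partner (zmax (Suc k)) = zmin k"
  using partner_eq[OF assms, of "zmax (Suc k)"] zmax_greatest[OF assms] zmin_ne_zmax[OF assms assms]
  by simp

lemma components_even: "\<forall>C \<in> induced_components S (junctions S). even (card C)"
proof
  fix C
  assume C: "C \<in> induced_components S (junctions S)"
  show "even (card C)"
  proof (rule even_card_involution[where h = partner])
    fix x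
    assume "x \<in> C"
    then obtain k where k: "Suc k < t" and "x = zmin k \<or> x = zmax (Suc k)"
      using induced_components_subset[OF C] junctions_iff_link_end by blast
    then have "partner x \<noteq> x \<and> partner (partner x) = x \<and>
        hasse_adj S x (partner x) \<and> partner x \<in> junctions S"
      using partner_zmin partner_zmax covers_zmin_zmax[OF k] zmin_ne_zmax[of k "Suc k"]
        junctions_iff_link_end unfolding hasse_adj_def by auto
    then show "partner x \<in> C" "partner (partner x) = x" "partner x \<noteq> x"
      using induced_component_closed[OF C \<open>x \<in> C\<close>] by auto
  qed
qed

end

section \<open>Boolean sequences\<close>

definition switch_points :: "(nat \<Rightarrow> bool) \<Rightarrow> nat \<Rightarrow> nat set" where
  "switch_points u m = {i. 0 < i \<and> i < m \<and> u (i - 1) \<noteq> u i}"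

lemma switch_points_bounds: "0 \<notin> switch_points u m" "switch_points u m \<subseteq> {..<m}"
  by (auto simp: switch_points_def)

lemma alternating_eq_iff_even:
  assumes "a \<le> b" and "{Suc a..b} \<subseteq> switch_points u m"
  shows "u a = u b \<longleftrightarrow> even (b - a)"
  using assms
proof (induction b)
  case (Suc b)
  show ?case
  proof (cases "a = Suc b")
    case False
    have "{Suc a..b} \<subseteq> switch_points u m"
      using Suc.prems(2) by (auto simp: subset_eq)
    then have "u a = u b \<longleftrightarrow> even (b - a)"
      using Suc.prems(1) False by (intro Suc.IH) auto
    moreover have "Suc b \<in> switch_points u m"
      using Suc.prems False by auto
    then have "u b \<noteq> u (Suc b)"
      by (simp add: switch_points_def)
    moreover have "Suc b - a = Suc (b - a)"
      using Suc.prems False by simp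
    ultimately show ?thesis
      by auto
  qed simp
qed simp

lemma run_start_exists:
  fixes A :: "nat set"
  assumes "p \<in> A" and "0 \<notin> A"
  shows "\<exists>a. 0 < a \<and> a \<le> p \<and> {a..p} \<subseteq> A \<and> a - 1 \<notin> A"
  using assms
proof (induction p)
  case (Suc p)
  show ?case
  proof (cases "p \<in> A")
    case True
    then obtain a where "0 < a" "a \<le> p" "{a..p} \<subseteq> A" "a - 1 \<notin> A"
      using Suc.IH Suc.prems(2) by blast
    moreover have "{a..Suc p} = insert (Suc p) {a..p}"
      using \<open>a \<le> p\<close> by (simp add: atLeastAtMostSuc_conv)
    ultimately show ?thesis
      using Suc.prems(1) by (intro exI[of _ a]) simp
  next
    case False
    then show ?thesis
      using Suc.prems(1) by (intro exI[of _ "Suc p"]) auto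
  qed
qed simp

lemma run_end_exists:
  fixes A :: "nat set"
  assumes "p \<in> A" and "A \<subseteq> {..<m}"
  shows "\<exists>b. p \<le> b \<and> {p..b} \<subseteq> A \<and> Suc b \<notin> A"
  using assms
proof (induction "m - p" arbitrary: p)
  case 0
  then show ?case
    by auto
next
  case (Suc d)
  show ?case
  proof (cases "Suc p \<in> A")
    case True
    moreover have "d = m - Suc p"
      using Suc.hyps(2) by simp
    ultimately obtain b where "Suc p \<le> b" "{Suc p..b} \<subseteq> A" "Suc b \<notin> A"
      using Suc.hyps(1) Suc.prems(2) by blast
    moreover have "{p..b} = insert p {Suc p..b}"
      using \<open>Suc p \<le> b\<close> by (simp add: Icc_eq_insert_lb_nat)
    ultimately show ?thesis
      using Suc.prems(1) by (intro exI[of _ b]) simp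
  next
    case False
    then show ?thesis
      using Suc.prems(1) by (intro exI[of _ p]) auto
  qed
qed

context
  fixes u :: "nat \<Rightarrow> bool" and m :: nat
  assumes even_runs: "\<And>a b. a \<le> b \<Longrightarrow> {a..b} \<subseteq> switch_points u m \<Longrightarrow>
    a - 1 \<notin> switch_points u m \<Longrightarrow> Suc b \<notin> switch_points u m \<Longrightarrow> even (Suc b - a)"
begin

lemma eq_across_switch_run:
  assumes "a \<le> b" and "{a..b} \<subseteq> switch_points u m"
    and "a - 1 \<notin> switch_points u m" and "Suc b \<notin> switch_points u m"
  shows "u (a - 1) = u b"
proof -
  have "a \<in> switch_points u m"
    using assms(1,2) by auto
  then have "0 < a"
    by (simp add: switch_points_def)
  then have "{Suc (a - 1)..b} \<subseteq> switch_points u m"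
    using assms(2) by simp
  then have "u (a - 1) = u b \<longleftrightarrow> even (b - (a - 1))"
    using assms(1) by (intro alternating_eq_iff_even) simp_all
  moreover have "b - (a - 1) = Suc b - a"
    using \<open>0 < a\<close> assms(1) by simp
  ultimately show ?thesis
    using even_runs[OF assms] by simp
qed

lemma eq_first_at_non_switch: "l < m \<Longrightarrow> l \<notin> switch_points u m \<Longrightarrow> u l = u 0"
proof (induction l rule: less_induct)
  case (less l)
  show ?case
  proof (cases l)
    case (Suc k)
    have "u k = u l"
      using less.prems Suc by (auto simp: switch_points_def)
    moreover have "u k = u 0"
    proof (cases "k \<in> switch_points u m")
      case True
      then obtain a where a: "0 < a" "a \<le> k" "{a..k} \<subseteq> switch_points u m"
        "a - 1 \<notin> switch_points u m"
        using run_start_exists[OF True switch_points_bounds(1)] by blast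
      then have "u (a - 1) = u k"
        using eq_across_switch_run[OF a(2-4)] less.prems(2) Suc by simp
      moreover have "u (a - 1) = u 0"
        using less.IH[of "a - 1"] a Suc less.prems(1) by simp
      ultimately show ?thesis
        by simp
    next
      case False
      then show ?thesis
        using less.IH[of k] less.prems Suc by simp
    qed
    ultimately show ?thesis
      by simp
  qed simp
qed

lemma ne_first_imp_next_eq_first:
  assumes "e < m" and "u e \<noteq> u 0"
  shows "Suc e < m \<and> u (Suc e) = u 0"
proof -
  have e: "e \<in> switch_points u m"
    using eq_first_at_non_switch assms by blast
  obtain a where a: "0 < a" "a \<le> e" "{a..e} \<subseteq> switch_points u m" "a - 1 \<notin> switch_points u m"
    using run_start_exists[OF e switch_points_bounds(1)] by blast
  obtain b where b: "e \<le> b" "{e..b} \<subseteq> switch_points u m" "Suc b \<notin> switch_points u m"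
    using run_end_exists[OF e switch_points_bounds(2)] by blast
  have run: "{a..b} \<subseteq> switch_points u m"
    using a(3) b(2) by (auto simp: subset_iff) (meson le_cases)
  have "b \<in> switch_points u m"
    using b(1,2) by auto
  then have "b < m"
    by (simp add: switch_points_def)
  have "u b = u 0"
    using eq_across_switch_run[OF _ run a(4) b(3)] a(2) b(1)
      eq_first_at_non_switch[of "a - 1"] a(4) \<open>b < m\<close> by simp
  then have "e < b"
    using assms(2) b(1) by (cases "e = b") auto
  then have "Suc e \<in> switch_points u m"
    using b(2) by auto
  then show ?thesis
    using assms(2) by (auto simp: switch_points_def)
qed

end

definition num_below :: "(nat \<Rightarrow> bool) \<Rightarrow> nat \<Rightarrow> nat" where
  "num_below P k = card {e. e < k \<and> P e}"

lemma num_below_0 [simp]: "num_below P 0 = 0"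
  by (simp add: num_below_def)

lemma num_below_Suc [simp]: "num_below P (Suc k) = num_below P k + (if P k then 1 else 0)"
proof -
  have "{e. e < Suc k \<and> P e} = (if P k then insert k {e. e < k \<and> P e} else {e. e < k \<and> P e})"
    by (auto simp: less_Suc_eq)
  then show ?thesis
    by (simp add: num_below_def)
qed

lemma num_below_add:
  assumes "a \<le> b"
  shows "num_below P b = num_below P a + card {e. a \<le> e \<and> e < b \<and> P e}"
proof -
  have "{e. e < b \<and> P e} = {e. e < a \<and> P e} \<union> {e. a \<le> e \<and> e < b \<and> P e}"
    using assms by auto
  moreover have "{e. e < a \<and> P e} \<inter> {e. a \<le> e \<and> e < b \<and> P e} = {}"
    by auto
  moreover have "finite {e. e < a \<and> P e}" and "finite {e. a \<le> e \<and> e < b \<and> P e}"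
    by simp_all
  ultimately show ?thesis
    unfolding num_below_def by (simp add: card_Un_disjoint)
qed

lemma num_below_mono: "a \<le> b \<Longrightarrow> num_below P a \<le> num_below P b"
  using num_below_add by simp

lemma num_below_eq_iff:
  assumes "a \<le> b"
  shows "num_below P a = num_below P b \<longleftrightarrow> (\<forall>e. a \<le> e \<and> e < b \<longrightarrow> \<not> P e)"
proof -
  have "finite {e. a \<le> e \<and> e < b \<and> P e}"
    by simp
  then show ?thesis
    using num_below_add[OF assms, of P] by auto
qed

lemma num_below_attains: "i \<le> num_below P m \<Longrightarrow> \<exists>k\<le>m. num_below P k = i"
proof (induction m)
  case (Suc m)
  show ?case
  proof (cases "i \<le> num_below P m")
    case True
    then show ?thesis
      using Suc.IH le_SucI by blast
  next
    case False
    then have "num_below P (Suc m) = i"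
      using Suc.prems by (auto split: if_splits)
    then show ?thesis
      by blast
  qed
qed simp

lemma num_below_consecutive:
  assumes "P a" and "0 < b" and "P (b - 1)" and "num_below P b = Suc (num_below P a)"
  shows "b = Suc a"
proof -
  have "num_below P (b - 1) = num_below P a"
    using assms(2-4) num_below_Suc[of P "b - 1"] by simp
  moreover have "num_below P (Suc a) = Suc (num_below P a)"
    using assms(1) by simp
  ultimately have "\<not> Suc a \<le> b - 1" and "\<not> b \<le> a"
    using num_below_mono[of "Suc a" "b - 1" P] num_below_mono[of b a P] assms(4) by auto
  then show ?thesis
    by simp
qed

section \<open>Posets whose Hasse graph is a path\<close>

lemma transp_chain:
  assumes "transp R" and "\<And>k. i \<le> k \<Longrightarrow> k < j \<Longrightarrow> R (f k) (f (Suc k))" and "i < j"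
  shows "R (f i) (f j)"
  using assms(3,2)
proof (induction j)
  case (Suc j)
  show ?case
  proof (cases "i = j")
    case False
    then have "R (f i) (f j)" and "R (f j) (f (Suc j))"
      using Suc by simp_all
    then show ?thesis
      by (rule transpD[OF assms(1)])
  qed (use Suc.prems in simp)
qed simp

definition ascends :: "(nat \<Rightarrow> 'a::order) \<Rightarrow> nat \<Rightarrow> bool" where
  "ascends v k \<longleftrightarrow> v k < v (Suc k)"

definition rising :: "(nat \<Rightarrow> 'a::order) \<Rightarrow> nat \<Rightarrow> nat \<Rightarrow> bool" where
  "rising v i j \<longleftrightarrow>
    (i < j \<and> (\<forall>k. i \<le> k \<and> k < j \<longrightarrow> ascends v k)) \<or>
    (j < i \<and> (\<forall>k. j \<le> k \<and> k < i \<longrightarrow> \<not> ascends v k))"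

lemma rising_altdef:
  "rising v i j \<longleftrightarrow> i \<noteq> j \<and>
    (\<forall>k. (i \<le> k \<and> k < j \<longrightarrow> ascends v k) \<and> (j \<le> k \<and> k < i \<longrightarrow> \<not> ascends v k))"
  unfolding rising_def by (cases i j rule: linorder_cases) auto

lemma rising_trans:
  assumes "rising v i m" and "rising v m j"
  shows "rising v i j"
proof -
  have "i \<noteq> j"
  proof
    assume "i = j"
    then have "ascends v (min i m) \<and> \<not> ascends v (min i m)"
      using assms unfolding rising_altdef by (cases "i < m") (auto simp: min_def)
    then show False
      by simp
  qed
  moreover have "(i \<le> k \<and> k < j \<longrightarrow> ascends v k) \<and> (j \<le> k \<and> k < i \<longrightarrow> \<not> ascends v k)" for k
    using assms unfolding rising_altdef by (cases "k < m") auto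
  ultimately show ?thesis
    unfolding rising_altdef by blast
qed

locale hasse_path =
  fixes S :: "'a::order set" and v :: "nat \<Rightarrow> 'a" and n :: nat
  assumes bij: "bij_betw v {0..<n} S"
    and adjacent_iff: "\<And>i j. i < n \<Longrightarrow> j < n \<Longrightarrow> hasse_adj S (v i) (v j) \<longleftrightarrow> i = Suc j \<or> j = Suc i"

lemma hasse_is_path_imp: "hasse_is_path S \<Longrightarrow> \<exists>v. hasse_path S v (card S)"
  unfolding hasse_is_path_def hasse_path_def by blast

context hasse_path
begin

abbreviation switches :: "nat set" where
  "switches \<equiv> switch_points (ascends v) (n - 1)"

lemma finite_S: "finite S"
  using bij bij_betw_finite by blast

lemma v_in_S: "i < n \<Longrightarrow> v i \<in> S"
  using bij by (auto simp: bij_betw_def)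

lemma v_eq_iff: "i < n \<Longrightarrow> j < n \<Longrightarrow> v i = v j \<longleftrightarrow> i = j"
  using bij by (auto simp: bij_betw_def inj_on_def)

lemma obtain_index:
  assumes "s \<in> S"
  obtains i where "i < n" and "s = v i"
  using assms bij by (auto simp: bij_betw_def)

lemma covers_iff:
  assumes "k < n" and "i < n"
  shows "covers_in S (v k) (v i) \<longleftrightarrow> (i = Suc k \<and> ascends v k) \<or> (k = Suc i \<and> \<not> ascends v i)"
proof
  assume cover: "covers_in S (v k) (v i)"
  then have "hasse_adj S (v k) (v i)"
    by (simp add: hasse_adj_def)
  then have "i = Suc k \<or> k = Suc i"
    using adjacent_iff[OF assms] by blast
  moreover have "v k < v i"
    using cover by (simp add: covers_in_def)
  ultimately show "(i = Suc k \<and> ascends v k) \<or> (k = Suc i \<and> \<not> ascends v i)"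
    by (auto simp: ascends_def)
next
  have "hasse_adj S (v k) (v i) \<longleftrightarrow> covers_in S (v k) (v i) \<or> covers_in S (v i) (v k)"
    by (simp add: hasse_adj_def)
  moreover assume "(i = Suc k \<and> ascends v k) \<or> (k = Suc i \<and> \<not> ascends v i)"
  ultimately show "covers_in S (v k) (v i)"
    using adjacent_iff[OF assms] by (auto simp: ascends_def covers_in_def)
qed

lemma descends: "Suc k < n \<Longrightarrow> \<not> ascends v k \<Longrightarrow> v (Suc k) < v k"
  using covers_iff[of "Suc k" k] by (simp add: covers_in_def)

lemma rising_imp_less:
  assumes "i < n" and "j < n" and "rising v i j"
  shows "v i < v j"
  using assms(3) unfolding rising_def
proof (elim disjE conjE)
  assume "i < j" and up: "\<forall>k. i \<le> k \<and> k < j \<longrightarrow> ascends v k"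
  have "v k < v (Suc k)" if "i \<le> k" "k < j" for k
    using up that by (simp add: ascends_def)
  then show "v i < v j"
    using transp_chain[OF transp_on_less _ \<open>i < j\<close>] by blast
next
  assume "j < i" and down: "\<forall>k. j \<le> k \<and> k < i \<longrightarrow> \<not> ascends v k"
  have "v k > v (Suc k)" if "j \<le> k" "k < i" for k
    using down that assms(1) descends by simp
  then show "v i < v j"
    using transp_chain[OF transp_on_greater _ \<open>j < i\<close>] by blast
qed

lemma less_imp_rising:
  assumes "i < n" and "j < n" and "v i < v j"
  shows "rising v i j"
  using assms
proof (induction "card {z \<in> S. v i < z \<and> z < v j}" arbitrary: i j rule: less_induct)
  case less
  show ?case
  proof (cases "\<exists>z\<in>S. v i < z \<and> z < v j")
    case False
    then have "covers_in S (v i) (v j)"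
      using less.prems v_in_S by (simp add: covers_in_def)
    then show ?thesis
      using covers_iff[OF less.prems(1,2)] by (auto simp: rising_def le_less_Suc_eq)
  next
    case True
    then obtain z where z: "z \<in> S" "v i < z" "z < v j"
      by blast
    obtain k where k: "k < n" "z = v k"
      using obtain_index[OF z(1)] .
    have "{w \<in> S. v i < w \<and> w < v k} \<subset> {w \<in> S. v i < w \<and> w < v j}"
      using z k by (auto intro: less_trans)
    then have "rising v i k"
      using less.hyps less.prems(1) k z by (simp add: psubset_card_mono finite_S)
    have "{w \<in> S. v k < w \<and> w < v j} \<subset> {w \<in> S. v i < w \<and> w < v j}"
      using z k by (auto intro: less_trans)
    then have "rising v k j"
      using less.hyps less.prems(2) k z by (simp add: psubset_card_mono finite_S)
    with \<open>rising v i k\<close> show ?thesis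
      by (rule rising_trans)
  qed
qed

lemma two_lower_covers_iff:
  assumes "i < n"
  shows "(\<exists>a b. a \<noteq> b \<and> covers_in S a (v i) \<and> covers_in S b (v i)) \<longleftrightarrow>
    0 < i \<and> Suc i < n \<and> ascends v (i - 1) \<and> \<not> ascends v i"
proof
  assume "\<exists>a b. a \<noteq> b \<and> covers_in S a (v i) \<and> covers_in S b (v i)"
  then obtain a b where ab: "a \<noteq> b" "covers_in S a (v i)" "covers_in S b (v i)"
    by blast
  then have "a \<in> S" "b \<in> S"
    by (simp_all add: covers_in_def)
  then obtain k l where kl: "k < n" "a = v k" "l < n" "b = v l"
    by (metis obtain_index)
  then have "k \<noteq> l"
    using ab(1) by blast
  moreover have "(i = Suc k \<and> ascends v k) \<or> (k = Suc i \<and> \<not> ascends v i)"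
    using ab(2) covers_iff[OF kl(1) assms] kl(2) by simp
  moreover have "(i = Suc l \<and> ascends v l) \<or> (l = Suc i \<and> \<not> ascends v i)"
    using ab(3) covers_iff[OF kl(3) assms] kl(4) by simp
  ultimately show "0 < i \<and> Suc i < n \<and> ascends v (i - 1) \<and> \<not> ascends v i"
    using kl(1,3) by auto
next
  assume i: "0 < i \<and> Suc i < n \<and> ascends v (i - 1) \<and> \<not> ascends v i"
  then have i': "i - 1 < n" "Suc (i - 1) = i"
    by auto
  then have "covers_in S (v (i - 1)) (v i)" "covers_in S (v (Suc i)) (v i)"
    using covers_iff[of "i - 1" i] covers_iff[of "Suc i" i] assms i by simp_all
  moreover have "v (i - 1) \<noteq> v (Suc i)"
    using i i' v_eq_iff[of "i - 1" "Suc i"] by simp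
  ultimately show "\<exists>a b. a \<noteq> b \<and> covers_in S a (v i) \<and> covers_in S b (v i)"
    by blast
qed

lemma two_upper_covers_iff:
  assumes "i < n"
  shows "(\<exists>a b. a \<noteq> b \<and> covers_in S (v i) a \<and> covers_in S (v i) b) \<longleftrightarrow>
    0 < i \<and> Suc i < n \<and> \<not> ascends v (i - 1) \<and> ascends v i"
proof
  assume "\<exists>a b. a \<noteq> b \<and> covers_in S (v i) a \<and> covers_in S (v i) b"
  then obtain a b where ab: "a \<noteq> b" "covers_in S (v i) a" "covers_in S (v i) b"
    by blast
  then have "a \<in> S" "b \<in> S"
    by (simp_all add: covers_in_def)
  then obtain k l where kl: "k < n" "a = v k" "l < n" "b = v l"
    by (metis obtain_index)
  then have "k \<noteq> l"
    using ab(1) by blast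
  moreover have "(k = Suc i \<and> ascends v i) \<or> (i = Suc k \<and> \<not> ascends v k)"
    using ab(2) covers_iff[OF assms kl(1)] kl(2) by simp
  moreover have "(l = Suc i \<and> ascends v i) \<or> (i = Suc l \<and> \<not> ascends v l)"
    using ab(3) covers_iff[OF assms kl(3)] kl(4) by simp
  ultimately show "0 < i \<and> Suc i < n \<and> \<not> ascends v (i - 1) \<and> ascends v i"
    using kl(1,3) by auto
next
  assume i: "0 < i \<and> Suc i < n \<and> \<not> ascends v (i - 1) \<and> ascends v i"
  then have i': "i - 1 < n" "Suc (i - 1) = i"
    by auto
  then have "covers_in S (v i) (v (i - 1))" "covers_in S (v i) (v (Suc i))"
    using covers_iff[of i "i - 1"] covers_iff[of i "Suc i"] assms i by simp_all
  moreover have "v (i - 1) \<noteq> v (Suc i)"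
    using i i' v_eq_iff[of "i - 1" "Suc i"] by simp
  ultimately show "\<exists>a b. a \<noteq> b \<and> covers_in S (v i) a \<and> covers_in S (v i) b"
    by blast
qed

lemma junction_iff_switch:
  assumes "i < n"
  shows "v i \<in> junctions S \<longleftrightarrow> i \<in> switches"
  unfolding junctions_iff[OF finite_S] two_lower_covers_iff[OF assms]
    two_upper_covers_iff[OF assms]
  by (auto simp: switch_points_def)

lemma junctions_eq: "junctions S = v ` switches"
proof
  show "junctions S \<subseteq> v ` switches"
  proof
    fix s
    assume s: "s \<in> junctions S"
    then obtain i where "i < n" "s = v i"
      using obtain_index by (auto simp: junctions_def)
    then show "s \<in> v ` switches"
      using junction_iff_switch s by blast
  qed
  show "v ` switches \<subseteq> junctions S"
    using junction_iff_switch by (auto simp: switch_points_def)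
qed

abbreviation junction_adj :: "'a \<Rightarrow> 'a \<Rightarrow> bool" where
  "junction_adj x y \<equiv> x \<in> junctions S \<and> y \<in> junctions S \<and> hasse_adj S x y"

context
  fixes a b :: nat
  assumes run_le: "a \<le> b" and run: "{a..b} \<subseteq> switches"
    and run_start: "a - 1 \<notin> switches" and run_end: "Suc b \<notin> switches"
begin

lemma run_below_n: "b < n"
proof -
  have "b \<in> switches"
    using run run_le by auto
  then show ?thesis
    by (auto simp: switch_points_def)
qed

lemma junction_walk_within_run: "junction_adj\<^sup>*\<^sup>* (v a) y \<Longrightarrow> y \<in> v ` {a..b}"
proof (induction rule: rtranclp_induct)
  case base
  then show ?case
    using run_le by simp
next
  case (step y z)
  obtain k where k: "k \<in> {a..b}" "y = v k"
    using step.IH by blast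
  obtain l where l: "l \<in> switches" "z = v l"
    using step.hyps(2) junctions_eq by auto
  have "k < n" "l < n"
    using k(1) run_below_n l(1) by (auto simp: switch_points_def)
  then have "l = Suc k \<or> k = Suc l"
    using adjacent_iff step.hyps(2) k(2) l(2) by blast
  then have "l \<in> {a..b}"
  proof
    assume "l = Suc k"
    then show ?thesis
      using k(1) l(1) run_end by (cases "k = b") auto
  next
    assume "k = Suc l"
    then show ?thesis
      using k(1) l(1) run_start by (cases "l = a - 1") auto
  qed
  then show ?case
    using l(2) by blast
qed

lemma junction_walk_along_run: "a \<le> k \<Longrightarrow> k \<le> b \<Longrightarrow> junction_adj\<^sup>*\<^sup>* (v a) (v k)"
proof (induction k)
  case (Suc k)
  show ?case
  proof (cases "a = Suc k")
    case False
    then have "k \<in> switches" and "Suc k \<in> switches"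
      using Suc.prems run by auto
    then have "junction_adj (v k) (v (Suc k))"
      using adjacent_iff Suc.prems run_below_n by (simp add: junctions_eq)
    moreover have "junction_adj\<^sup>*\<^sup>* (v a) (v k)"
      using Suc False by simp
    ultimately show ?thesis
      by (simp add: rtranclp.rtrancl_into_rtrancl)
  qed simp
qed simp

lemma switch_run_component: "v ` {a..b} \<in> induced_components S (junctions S)"
proof -
  have "{y \<in> junctions S. junction_adj\<^sup>*\<^sup>* (v a) y} = v ` {a..b}"
    using junction_walk_within_run junction_walk_along_run run by (auto simp: junctions_eq)
  moreover have "v a \<in> junctions S"
    using run run_le junctions_eq by auto
  ultimately show ?thesis
    unfolding induced_components_def by blast
qed

lemma card_switch_run: "card (v ` {a..b}) = Suc b - a"
proof -
  have "{a..b} \<subseteq> {0..<n}"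
    using run_below_n by auto
  then have "inj_on v {a..b}"
    using bij_betw_imp_inj_on[OF bij] inj_on_subset by blast
  then show ?thesis
    by (simp add: card_image)
qed

end

lemma switch_runs_even:
  assumes "\<forall>C \<in> induced_components S (junctions S). even (card C)"
    and "a \<le> b" and "{a..b} \<subseteq> switches"
    and "a - 1 \<notin> switches" and "Suc b \<notin> switches"
  shows "even (Suc b - a)"
  using assms(1) switch_run_component[OF assms(2-)] card_switch_run[OF assms(2-)] by metis

lemma ascent_pattern:
  assumes "\<forall>C \<in> induced_components S (junctions S). even (card C)"
    and "Suc e < n" and "ascends v e \<noteq> ascends v 0"
  shows "Suc (Suc e) < n \<and> ascends v (Suc e) = ascends v 0"
proof -
  have "e < n - 1"
    using assms(2) by simp
  then show ?thesis
    using ne_first_imp_next_eq_first[where u = "ascends v" and m = "n - 1",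
        OF switch_runs_even[OF assms(1)] _ assms(3)]
    by auto
qed

text \<open>\<open>block k\<close> counts the ascending edges before \<open>v k\<close>, so \<open>descent_run i\<close> is the
  \<open>i\<close>-th maximal descending run of the path.\<close>

abbreviation block :: "nat \<Rightarrow> nat" where
  "block \<equiv> num_below (ascends v)"

definition descent_run :: "nat \<Rightarrow> 'a set" where
  "descent_run i = v ` {k. k < n \<and> block k = i}"

lemma same_block_le:
  assumes "a \<le> b" and "b < n" and "block a = block b"
  shows "v b \<le> v a"
proof (cases "a = b")
  case False
  then have "rising v b a"
    using assms num_below_eq_iff[OF assms(1)] by (simp add: rising_def)
  then have "v b < v a"
    using rising_imp_less[OF assms(2)] assms(1,2) by simp
  then show ?thesis
    by simp
qed simp

lemma descent_run_chain: "is_chain_set (descent_run i)"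
  unfolding is_chain_set_def
proof (intro ballI)
  fix x y
  assume "x \<in> descent_run i" and "y \<in> descent_run i"
  then obtain a b where ab: "a < n" "b < n" "block a = block b" and "x = v a" "y = v b"
    by (auto simp: descent_run_def)
  moreover have "v b \<le> v a \<or> v a \<le> v b"
  proof (cases "a \<le> b")
    case True
    then show ?thesis
      using same_block_le[OF True ab(2,3)] by simp
  next
    case False
    then show ?thesis
      using same_block_le[of b a] ab by simp
  qed
  ultimately show "x \<le> y \<or> y \<le> x"
    by blast
qed

lemma least_in_descent_run_iff:
  assumes "a < n"
  shows "(\<forall>z\<in>descent_run (block a). v a \<le> z) \<longleftrightarrow> Suc a = n \<or> ascends v a"
proof
  assume least: "\<forall>z\<in>descent_run (block a). v a \<le> z"
  show "Suc a = n \<or> ascends v a"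
  proof (rule ccontr)
    assume "\<not> (Suc a = n \<or> ascends v a)"
    then have "Suc a < n" and "\<not> ascends v a"
      using assms by auto
    then have "v (Suc a) \<in> descent_run (block a)" and "v (Suc a) < v a"
      using descends by (auto simp: descent_run_def)
    then show False
      using least by (auto dest: leD)
  qed
next
  assume last: "Suc a = n \<or> ascends v a"
  show "\<forall>z\<in>descent_run (block a). v a \<le> z"
  proof
    fix z
    assume "z \<in> descent_run (block a)"
    then obtain k where k: "k < n" "block k = block a" "z = v k"
      by (auto simp: descent_run_def)
    show "v a \<le> z"
    proof (cases "k \<le> a")
      case True
      then show ?thesis
        using same_block_le[OF True assms] k by simp
    next
      case False
      then have "Suc a \<le> k" and "ascends v a"
        using last k(1) by auto
      then show ?thesis
        using num_below_mono[of "Suc a" k "ascends v"] k(2) by simp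
    qed
  qed
qed

lemma greatest_in_descent_run_iff:
  assumes "b < n"
  shows "(\<forall>z\<in>descent_run (block b). z \<le> v b) \<longleftrightarrow> b = 0 \<or> ascends v (b - 1)"
proof
  assume greatest: "\<forall>z\<in>descent_run (block b). z \<le> v b"
  show "b = 0 \<or> ascends v (b - 1)"
  proof (rule ccontr)
    assume "\<not> (b = 0 \<or> ascends v (b - 1))"
    then have "Suc (b - 1) = b" and "\<not> ascends v (b - 1)"
      by auto
    then have "v (b - 1) \<in> descent_run (block b)" and "v b < v (b - 1)"
      using descends[of "b - 1"] assms num_below_Suc[of "ascends v" "b - 1"]
      by (auto simp: descent_run_def)
    then show False
      using greatest by (auto dest: leD)
  qed
next
  assume first: "b = 0 \<or> ascends v (b - 1)"
  show "\<forall>z\<in>descent_run (block b). z \<le> v b"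
  proof
    fix z
    assume "z \<in> descent_run (block b)"
    then obtain k where k: "k < n" "block k = block b" "z = v k"
      by (auto simp: descent_run_def)
    show "z \<le> v b"
    proof (cases "b \<le> k")
      case True
      then show ?thesis
        using same_block_le[OF True k(1)] k by simp
    next
      case False
      then have "k \<le> b - 1" and "Suc (b - 1) = b" and "ascends v (b - 1)"
        using first by auto
      then show ?thesis
        using num_below_mono[of k "b - 1" "ascends v"] num_below_Suc[of "ascends v" "b - 1"] k(2)
        by simp
    qed
  qed
qed

lemma descent_runs_disjoint: "i \<noteq> j \<Longrightarrow> descent_run i \<inter> descent_run j = {}"
  by (auto simp: descent_run_def v_eq_iff)

lemma descent_runs_cover: "(\<Union>i<Suc (block (n - 1)). descent_run i) = S"
proof
  show "(\<Union>i<Suc (block (n - 1)). descent_run i) \<subseteq> S"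
    using v_in_S by (auto simp: descent_run_def)
  show "S \<subseteq> (\<Union>i<Suc (block (n - 1)). descent_run i)"
  proof
    fix s
    assume "s \<in> S"
    then obtain k where k: "k < n" "s = v k"
      by (rule obtain_index)
    then have "block k \<le> block (n - 1)"
      by (intro num_below_mono) simp
    then show "s \<in> (\<Union>i<Suc (block (n - 1)). descent_run i)"
      using k by (auto simp: descent_run_def)
  qed
qed

lemma ascent_between_blocks_iff:
  assumes "a < n" and "b < n"
  shows "b = Suc a \<and> ascends v a \<longleftrightarrow>
    block b = Suc (block a) \<and> (Suc a = n \<or> ascends v a) \<and> (b = 0 \<or> ascends v (b - 1))"
proof
  assume "b = Suc a \<and> ascends v a"
  then show "block b = Suc (block a) \<and> (Suc a = n \<or> ascends v a) \<and> (b = 0 \<or> ascends v (b - 1))"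
    by simp
next
  assume right: "block b = Suc (block a) \<and> (Suc a = n \<or> ascends v a) \<and> (b = 0 \<or> ascends v (b - 1))"
  then have "0 < b" and "ascends v (b - 1)"
    by (auto intro: Nat.gr0I)
  moreover have "\<not> b \<le> a"
    using right num_below_mono[of b a "ascends v"] by auto
  then have "ascends v a"
    using right assms(2) by auto
  ultimately show "b = Suc a \<and> ascends v a"
    using num_below_consecutive[of "ascends v" a b] right by simp
qed

lemma chain_if_no_ascent:
  assumes "\<And>e. Suc e < n \<Longrightarrow> \<not> ascends v e"
  shows "is_chain_set S"
proof -
  have "block k = 0" if "k < n" for k
    using num_below_eq_iff[of 0 k "ascends v"] assms that by simp
  then have "S = descent_run 0"
    using bij by (auto simp: descent_run_def bij_betw_def)
  then show ?thesis
    using descent_run_chain by simp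
qed

context
  assumes first_descends: "\<not> ascends v 0"
    and last_descends: "\<not> ascends v (n - 2)"
    and no_double_ascent: "\<And>e. Suc (Suc e) < n \<Longrightarrow> ascends v e \<Longrightarrow> \<not> ascends v (Suc e)"
    and some_ascent: "\<exists>e. Suc e < n \<and> ascends v e"
begin

lemma two_le_n: "2 \<le> n"
  using some_ascent by auto

lemma descent_at_vertex:
  assumes "k < n"
  shows "(Suc k < n \<and> \<not> ascends v k) \<or> (0 < k \<and> \<not> ascends v (k - 1))"
proof -
  consider "k = 0" | "Suc k = n" | "0 < k" "Suc k < n"
    using assms by linarith
  then show ?thesis
  proof cases
    case 1
    then show ?thesis
      using first_descends two_le_n by simp
  next
    case 2
    then show ?thesis
      using last_descends two_le_n by (auto simp: numeral_2_eq_2)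
  next
    case 3
    then show ?thesis
      using no_double_ascent[of "k - 1"] by auto
  qed
qed

lemma two_le_card_descent_run:
  assumes "i \<le> block (n - 1)"
  shows "2 \<le> card (descent_run i)"
proof -
  obtain k where k: "k \<le> n - 1" "block k = i"
    using num_below_attains[OF assms] by blast
  then have "k < n"
    using two_le_n by simp
  obtain l where l: "l < n" "l \<noteq> k" "block l = i"
  proof (cases "Suc k < n \<and> \<not> ascends v k")
    case True
    then show ?thesis
      using that[of "Suc k"] k by simp
  next
    case False
    then have "0 < k" "\<not> ascends v (k - 1)"
      using descent_at_vertex[OF \<open>k < n\<close>] by auto
    moreover have "block (Suc (k - 1)) = block (k - 1) + (if ascends v (k - 1) then 1 else 0)"
      by (rule num_below_Suc)
    ultimately have "block (k - 1) = i"
      using k(2) by simp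
    then show ?thesis
      using that[of "k - 1"] \<open>0 < k\<close> \<open>k < n\<close> by simp
  qed
  have "v k \<noteq> v l"
    using v_eq_iff \<open>k < n\<close> l by simp
  moreover have "v k \<in> descent_run i" "v l \<in> descent_run i"
    using \<open>k < n\<close> k l by (auto simp: descent_run_def)
  moreover have "finite (descent_run i)"
    by (simp add: descent_run_def)
  ultimately show ?thesis
    using two_le_card_iff by blast
qed

lemma less_across_descent_runs:
  assumes "a < n" and "b < n" and "block a \<noteq> block b"
  shows "v a < v b \<longleftrightarrow> b = Suc a \<and> ascends v a"
proof
  assume "v a < v b"
  then have "rising v a b"
    using less_imp_rising assms(1,2) by blast
  then consider (up) "a < b" "\<forall>k. a \<le> k \<and> k < b \<longrightarrow> ascends v k"
    | (down) "b < a" "\<forall>k. b \<le> k \<and> k < a \<longrightarrow> \<not> ascends v k"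
    unfolding rising_def by blast
  then show "b = Suc a \<and> ascends v a"
  proof cases
    case up
    have "\<not> Suc a < b"
      using up no_double_ascent[of a] assms(2) by auto
    then show ?thesis
      using up by simp
  next
    case down
    then have "block b = block a"
      using num_below_eq_iff[of b a] by simp
    then show ?thesis
      using assms(3) by simp
  qed
next
  assume "b = Suc a \<and> ascends v a"
  then show "v a < v b"
    by (simp add: ascends_def)
qed

lemma less_across_descent_runs_iff:
  assumes "i \<noteq> j" and x: "x \<in> descent_run i" and y: "y \<in> descent_run j"
  shows "x < y \<longleftrightarrow> j = Suc i \<and> (\<forall>z\<in>descent_run i. x \<le> z) \<and> (\<forall>z\<in>descent_run j. z \<le> y)"
proof -
  obtain a b where ab: "a < n" "block a = i" "x = v a" "b < n" "block b = j" "y = v b"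
    using x y by (auto simp: descent_run_def)
  then have "x < y \<longleftrightarrow> b = Suc a \<and> ascends v a"
    using less_across_descent_runs assms(1) by simp
  also have "\<dots> \<longleftrightarrow> j = Suc i \<and> (Suc a = n \<or> ascends v a) \<and> (b = 0 \<or> ascends v (b - 1))"
    using ascent_between_blocks_iff[OF ab(1,4)] ab by simp
  also have "\<dots> \<longleftrightarrow> j = Suc i \<and> (\<forall>z\<in>descent_run i. x \<le> z) \<and> (\<forall>z\<in>descent_run j. z \<le> y)"
    using least_in_descent_run_iff[OF ab(1)] greatest_in_descent_run_iff[OF ab(4)] ab by simp
  finally show ?thesis .
qed

lemma wattle_descent_runs: "wattle S (Suc (block (n - 1))) descent_run"
proof
  obtain e where "Suc e < n" "ascends v e"
    using some_ascent by blast
  moreover from this have "block (Suc e) \<le> block (n - 1)"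
    by (intro num_below_mono) simp
  ultimately show "2 \<le> Suc (block (n - 1))"
    by simp
next
  fix i
  assume "i < Suc (block (n - 1))"
  then show "2 \<le> card (descent_run i)"
    using two_le_card_descent_run by simp
  show "descent_run i \<subseteq> S" and "finite (descent_run i)"
    using v_in_S by (auto simp: descent_run_def)
qed (use descent_run_chain descent_runs_disjoint descent_runs_cover less_across_descent_runs_iff
    in auto)

end

lemma reverse_path: "hasse_path S (\<lambda>k. v (n - 1 - k)) n"
proof
  have "bij_betw (\<lambda>k. n - 1 - k) {0..<n} {0..<n}"
    by (rule bij_betw_byWitness[where f' = "\<lambda>k. n - 1 - k"]) auto
  then show "bij_betw (\<lambda>k. v (n - 1 - k)) {0..<n} S"
    using bij_betw_trans[OF _ bij] by (simp add: comp_def)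
next
  fix i j
  assume "i < n" and "j < n"
  then have "n - 1 - i = Suc (n - 1 - j) \<or> n - 1 - j = Suc (n - 1 - i) \<longleftrightarrow> i = Suc j \<or> j = Suc i"
    by linarith
  then show "hasse_adj S (v (n - 1 - i)) (v (n - 1 - j)) \<longleftrightarrow> i = Suc j \<or> j = Suc i"
    using adjacent_iff \<open>i < n\<close> \<open>j < n\<close> by simp
qed

lemma reverse_ascends_0:
  assumes "2 \<le> n"
  shows "ascends (\<lambda>k. v (n - 1 - k)) 0 \<longleftrightarrow> \<not> ascends v (n - 2)"
proof -
  obtain m where m: "n = Suc (Suc m)"
    using assms by (metis add_2_eq_Suc le_Suc_ex)
  then have "ascends (\<lambda>k. v (n - 1 - k)) 0 \<longleftrightarrow> v (Suc m) < v m"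
    by (simp add: ascends_def)
  also have "\<dots> \<longleftrightarrow> \<not> ascends v m"
    using descends[of m] m by (auto simp: ascends_def)
  finally show ?thesis
    using m by simp
qed

lemma chain_or_wattle_if_first_descends:
  assumes even: "\<forall>C \<in> induced_components S (junctions S). even (card C)"
    and first: "\<not> ascends v 0"
  shows "is_chain_set S \<or> is_wattle S"
proof (cases "\<exists>e. Suc e < n \<and> ascends v e")
  case True
  have isolated: "Suc (Suc e) < n \<and> \<not> ascends v (Suc e)" if "Suc e < n" "ascends v e" for e
    using ascent_pattern[OF even that(1)] that(2) first by blast
  have "Suc (n - 2) < n" and "\<not> Suc (Suc (n - 2)) < n"
    using True by auto
  then have "\<not> ascends v (n - 2)"
    using isolated by blast
  moreover have "\<not> ascends v (Suc e)" if "Suc (Suc e) < n" "ascends v e" for e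
    using isolated[of e] that by simp
  ultimately have "wattle S (Suc (block (n - 1))) descent_run"
    using wattle_descent_runs[OF first] True by blast
  then show ?thesis
    using is_wattle_iff by blast
next
  case False
  then show ?thesis
    using chain_if_no_ascent by blast
qed

lemma chain_or_wattle_if_components_even:
  assumes even: "\<forall>C \<in> induced_components S (junctions S). even (card C)"
  shows "is_chain_set S \<or> is_wattle S"
proof (cases "ascends v 0 \<and> 2 \<le> n")
  case True
  \<comment> \<open>the hypothesis does not mention \<open>v\<close>, so the path may be reversed\<close>
  interpret reversed: hasse_path S "\<lambda>k. v (n - 1 - k)" n
    by (rule reverse_path)
  have "ascends v (n - 2) = ascends v 0"
    using ascent_pattern[OF even, of "n - 2"] True by fastforce
  then have "\<not> ascends (\<lambda>k. v (n - 1 - k)) 0"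
    using reverse_ascends_0 True by simp
  then show ?thesis
    using reversed.chain_or_wattle_if_first_descends even by blast
next
  case False
  then consider "\<not> ascends v 0" | "n < 2"
    by linarith
  then show ?thesis
    using chain_or_wattle_if_first_descends[OF even] chain_if_no_ascent by cases auto
qed

end

theorem lemma12:
  fixes S :: "'a::order set"
  assumes "finite S"
    and "hasse_is_path S"
  shows "(is_chain_set S \<or> is_wattle S) \<longleftrightarrow>
         (\<forall>C \<in> induced_components S (junctions S). even (card C))"
proof
  assume "is_chain_set S \<or> is_wattle S"
  then show "\<forall>C \<in> induced_components S (junctions S). even (card C)"
  proof
    assume "is_chain_set S"
    then have "junctions S = {}"
      using junctions_chain[OF assms(1)] by blast
    then show ?thesis
      by (simp add: induced_components_def)
  next
    assume "is_wattle S"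
    then show ?thesis
      using wattle.components_even is_wattle_iff by blast
  qed
next
  obtain v where "hasse_path S v (card S)"
    using hasse_is_path_imp[OF assms(2)] by blast
  moreover assume "\<forall>C \<in> induced_components S (junctions S). even (card C)"
  ultimately show "is_chain_set S \<or> is_wattle S"
    using hasse_path.chain_or_wattle_if_components_even by blast
qed

end
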